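(* Let $G=(V,E)$ be any graph on $n\geq 1$ vertices. Then $F(G)\geq \lfloor (n-1)/2\rfloor$.
   Context: All graphs are finite and simple. Given a graph $G=(V,E)$ and a set $S\subseteq V$ of filled vertices, the color change rule is: if a filled vertex $v$ has exactly one unfilled neighbor $w$, then $w$ becomes filled. The derived set of $S$ is the set of filled vertices obtained after applying the rule until no further application is possible. $S$ is a zero forcing set if its derived set is $V$; otherwise $S$ is a failed zero forcing set. The failed zero forcing number $F(G)$ is the maximum size of a failed zero forcing set of $G$. *)

theory Defs
  imports Main
begin

definition simple_graph :: "'a set \<Rightarrow> ('a \<Rightarrow> 'a \<Rightarrow> bool) \<Rightarrow> bool" where
  "simple_graph V E \<longleftrightarrow> finite V \<and> (\<forall>u v. E u v \<longrightarrow> u \<in> V \<and> v \<in> V) \<and>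
     (\<forall>u v. E u v \<longrightarrow> E v u) \<and> (\<forall>v. \<not> E v v)"

inductive_set derived_set :: "'a set \<Rightarrow> ('a \<Rightarrow> 'a \<Rightarrow> bool) \<Rightarrow> 'a set \<Rightarrow> 'a set"
  for V :: "'a set" and E :: "'a \<Rightarrow> 'a \<Rightarrow> bool" and S :: "'a set" where
  init: "w \<in> S \<Longrightarrow> w \<in> derived_set V E S"
| force: "v \<in> derived_set V E S \<Longrightarrow> E v w \<Longrightarrow>
          (\<forall>u. E v u \<and> u \<noteq> w \<longrightarrow> u \<in> derived_set V E S) \<Longrightarrow> w \<in> derived_set V E S"

definition zero_forcing_set :: "'a set \<Rightarrow> ('a \<Rightarrow> 'a \<Rightarrow> bool) \<Rightarrow> 'a set \<Rightarrow> bool" where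
  "zero_forcing_set V E S \<longleftrightarrow> S \<subseteq> V \<and> derived_set V E S = V"

definition failed_zero_forcing_set :: "'a set \<Rightarrow> ('a \<Rightarrow> 'a \<Rightarrow> bool) \<Rightarrow> 'a set \<Rightarrow> bool" where
  "failed_zero_forcing_set V E S \<longleftrightarrow> S \<subseteq> V \<and> derived_set V E S \<noteq> V"

text \<open>Failed zero forcing number: maximum size of a failed zero forcing set
(for n \<ge> 1 the empty set is failed, so the maximum exists).\<close>
definition failed_zf_number :: "'a set \<Rightarrow> ('a \<Rightarrow> 'a \<Rightarrow> bool) \<Rightarrow> nat" where
  "failed_zf_number V E = Max (card ` {S. failed_zero_forcing_set V E S})"

end

theory Submission
  imports Defs
begin

text \<open>A fort is a nonempty vertex set U such that no vertex outside U has exactly one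
neighbour in U. Nothing in a fort can ever be forced from its complement, so the complement of a
fort is a failed zero forcing set, and it suffices to find a fort with at most n/2 + 1 vertices. If all degrees are at least 3, a maximum cut gives every vertex at
least two neighbours on the other side, so the smaller side is a fort. An isolated vertex is a
fort. For a vertex v of degree 1 or 2 with neighbour y, delete v and y (when v has a second
neighbour z, let z inherit the neighbours of y); a small fort of the smaller graph, extended by at
most one of v, y, becomes a fort of the original graph.\<close>

lemma card_filter_insert:
  assumes "finite A" "x \<notin> A"
  shows "card {b \<in> insert x A. P b} = card {b \<in> A. P b} + (if P x then 1 else 0)"
proof -
  have "{b \<in> insert x A. P b} = (if P x then insert x {b \<in> A. P b} else {b \<in> A. P b})"
    by auto
  then show ?thesis using assms by simp
qed

lemma sum_indicator_card:
  "finite A \<Longrightarrow> (\<Sum>a\<in>A. if P a then 1 else 0) = card {a \<in> A. P a}"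
  by (simp add: sum.inter_filter[symmetric])

lemma ex_max_on_finite:
  fixes f :: "'b \<Rightarrow> nat"
  assumes "finite S" "S \<noteq> {}"
  obtains x where "x \<in> S" "\<And>y. y \<in> S \<Longrightarrow> f y \<le> f x"
proof -
  have "Max (f ` S) \<in> f ` S" using assms by simp
  then obtain x where "x \<in> S" "f x = Max (f ` S)" by auto
  then show thesis using that assms by simp
qed

lemma simple_graph_sym: "simple_graph V E \<Longrightarrow> E u v \<longleftrightarrow> E v u"
  unfolding simple_graph_def by blast

definition fort :: "'a set \<Rightarrow> ('a \<Rightarrow> 'a \<Rightarrow> bool) \<Rightarrow> 'a set \<Rightarrow> bool" where
  "fort V E U \<longleftrightarrow> U \<noteq> {} \<and> U \<subseteq> V \<and> (\<forall>x\<in>V - U. card {u \<in> U. E x u} \<noteq> 1)"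

lemma fort_cong:
  assumes "\<And>x u. x \<in> V - U \<Longrightarrow> u \<in> U \<inter> V \<Longrightarrow> E x u \<longleftrightarrow> E' x u"
  shows "fort V E U \<longleftrightarrow> fort V E' U"
proof -
  have "{u \<in> U. E x u} = {u \<in> U. E' x u}" if "U \<subseteq> V" "x \<in> V - U" for x
    using assms that by blast
  then show ?thesis unfolding fort_def by auto
qed

lemma fort_if_no_edges_leaving:
  assumes "U \<noteq> {}" "U \<subseteq> V" "\<And>x u. x \<in> V - U \<Longrightarrow> u \<in> U \<Longrightarrow> \<not> E x u"
  shows "fort V E U"
proof -
  have "{u \<in> U. E x u} = {}" if "x \<in> V - U" for x using assms(3) that by blast
  then show ?thesis using assms(1,2) unfolding fort_def by (metis card.empty zero_neq_one)
qed

lemma derived_set_disjoint_fort: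
  assumes sg: "simple_graph V E" and U: "fort V E U"
  shows "derived_set V E (V - U) \<inter> U = {}"
proof -
  have "w \<in> V - U" if "w \<in> derived_set V E (V - U)" for w
    using that
  proof (induction rule: derived_set.induct)
    case (force v w)
    show ?case
    proof (rule ccontr)
      assume "w \<notin> V - U"
      then have "w \<in> U" using force.hyps(2) sg unfolding simple_graph_def by blast
      then have "{u \<in> U. E v u} = {w}" using force by blast
      then have "card {u \<in> U. E v u} = 1" by simp
      then show False using U force.IH unfolding fort_def by blast
    qed
  qed
  then show ?thesis by blast
qed

lemma failed_zero_forcing_set_Diff_fort:
  "simple_graph V E \<Longrightarrow> fort V E U \<Longrightarrow> failed_zero_forcing_set V E (V - U)"
  using derived_set_disjoint_fort unfolding failed_zero_forcing_set_def fort_def by blast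

lemma card_le_failed_zf_number:
  assumes "finite V" and "failed_zero_forcing_set V E S"
  shows "card S \<le> failed_zf_number V E"
proof -
  have "{S. failed_zero_forcing_set V E S} \<subseteq> Pow V"
    unfolding failed_zero_forcing_set_def by blast
  then have "finite (card ` {S. failed_zero_forcing_set V E S})"
    using assms(1) by (meson finite_Pow_iff finite_imageI finite_subset)
  then show ?thesis unfolding failed_zf_number_def using assms(2) by simp
qed

definition cut_size :: "'a set \<Rightarrow> ('a \<Rightarrow> 'a \<Rightarrow> bool) \<Rightarrow> 'a set \<Rightarrow> nat" where
  "cut_size V E A = (\<Sum>a\<in>A. card {b \<in> V - A. E a b})"

lemma cut_size_insert:
  assumes sg: "simple_graph V E" and B: "B \<subseteq> V" and x: "x \<in> V - B"
  shows "cut_size V E (insert x B) + card {b \<in> B. E x b} =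
    cut_size V E B + card {b \<in> V - B. E x b}"
proof -
  have finV: "finite V" and irr: "\<And>v. \<not> E v v"
    using sg unfolding simple_graph_def by blast+
  have finB: "finite B" using B finV finite_subset by blast
  have VB: "V - B = insert x (V - insert x B)" using x by blast
  have across: "card {b \<in> V - B. E a b} = card {b \<in> V - insert x B. E a b} + (if E a x then 1 else 0)"
    for a unfolding VB by (rule card_filter_insert) (use finV in auto)
  have "cut_size V E B = (\<Sum>a\<in>B. card {b \<in> V - insert x B. E a b} + (if E a x then 1 else 0))"
    unfolding cut_size_def across ..
  also have "\<dots> = (\<Sum>a\<in>B. card {b \<in> V - insert x B. E a b}) + card {b \<in> B. E x b}"
    using finB by (simp add: sum.distrib sum_indicator_card simple_graph_sym[OF sg])
  finally have "cut_size V E B = (\<Sum>a\<in>B. card {b \<in> V - insert x B. E a b}) + card {b \<in> B. E x b}" .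
  moreover have "cut_size V E (insert x B) =
      card {b \<in> V - insert x B. E x b} + (\<Sum>a\<in>B. card {b \<in> V - insert x B. E a b})"
    unfolding cut_size_def by (rule sum.insert) (use finB x in auto)
  moreover have "{b \<in> V - insert x B. E x b} = {b \<in> V - B. E x b}" using irr by blast
  ultimately show ?thesis by simp
qed

lemma exists_unfriendly_partition:
  assumes sg: "simple_graph V E"
  obtains A where "A \<subseteq> V"
    and "\<And>x. x \<in> A \<Longrightarrow> card {b \<in> A. E x b} \<le> card {b \<in> V - A. E x b}"
    and "\<And>x. x \<in> V - A \<Longrightarrow> card {b \<in> V - A. E x b} \<le> card {b \<in> A. E x b}"
proof -
  have irr: "\<And>v. \<not> E v v" using sg unfolding simple_graph_def by blast
  have "finite (Pow V)" using sg unfolding simple_graph_def by simp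
  then obtain A where A: "A \<in> Pow V" and max: "\<And>B. B \<in> Pow V \<Longrightarrow> cut_size V E B \<le> cut_size V E A"
    using ex_max_on_finite[of "Pow V" "cut_size V E"] by blast
  show thesis
  proof (rule that)
    show "A \<subseteq> V" using A by simp
  next
    fix x assume x: "x \<in> A"
    have "{b \<in> A - {x}. E x b} = {b \<in> A. E x b}" and "{b \<in> V - (A - {x}). E x b} = {b \<in> V - A. E x b}"
      using irr by auto
    moreover have "insert x (A - {x}) = A" using x by blast
    ultimately have "cut_size V E A + card {b \<in> A. E x b} = cut_size V E (A - {x}) + card {b \<in> V - A. E x b}"
      using cut_size_insert[OF sg, of "A - {x}" x] A x by auto
    moreover have "cut_size V E (A - {x}) \<le> cut_size V E A" using max A by blast
    ultimately show "card {b \<in> A. E x b} \<le> card {b \<in> V - A. E x b}" by linarith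
  next
    fix x assume x: "x \<in> V - A"
    have "cut_size V E (insert x A) + card {b \<in> A. E x b} = cut_size V E A + card {b \<in> V - A. E x b}"
      using cut_size_insert[OF sg, of A x] A x by auto
    moreover have "cut_size V E (insert x A) \<le> cut_size V E A" using max A x by blast
    ultimately show "card {b \<in> V - A. E x b} \<le> card {b \<in> A. E x b}" by linarith
  qed
qed

lemma card_neighbours_split:
  assumes "simple_graph V E" "A \<subseteq> V"
  shows "card {u. E x u} = card {b \<in> A. E x b} + card {b \<in> V - A. E x b}"
proof -
  have "finite V" using assms(1) unfolding simple_graph_def by blast
  have "{u. E x u} = {b \<in> A. E x b} \<union> {b \<in> V - A. E x b}"
    using assms unfolding simple_graph_def by auto
  also have "card \<dots> = card {b \<in> A. E x b} + card {b \<in> V - A. E x b}"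
    using \<open>finite V\<close> assms(2) by (intro card_Un_disjoint) (auto intro: rev_finite_subset)
  finally show ?thesis .
qed

lemma small_fort_if_min_degree_ge_3:
  assumes sg: "simple_graph V E" and "V \<noteq> {}" and deg: "\<And>x. x \<in> V \<Longrightarrow> 3 \<le> card {u. E x u}"
  shows "\<exists>U. fort V E U \<and> card U \<le> card V div 2"
proof -
  obtain A where AV: "A \<subseteq> V"
    and A: "\<And>x. x \<in> A \<Longrightarrow> card {b \<in> A. E x b} \<le> card {b \<in> V - A. E x b}"
    and B: "\<And>x. x \<in> V - A \<Longrightarrow> card {b \<in> V - A. E x b} \<le> card {b \<in> A. E x b}"
    using exists_unfriendly_partition[OF sg] by blast
  have A2: "2 \<le> card {b \<in> V - A. E x b}" if "x \<in> A" for x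
    using A[OF that] deg[of x] card_neighbours_split[OF sg AV, of x] that AV by auto
  have B2: "2 \<le> card {b \<in> A. E x b}" if "x \<in> V - A" for x
    using B[OF that] deg[of x] card_neighbours_split[OF sg AV, of x] that by auto
  have "A \<noteq> {} \<and> V - A \<noteq> {}"
  proof -
    obtain x where "x \<in> V" using \<open>V \<noteq> {}\<close> by blast
    then have "A \<noteq> {} \<or> V - A \<noteq> {}" by blast
    then show ?thesis using A2 B2 by fastforce
  qed
  then have "fort V E A" and "fort V E (V - A)"
    unfolding fort_def using AV A2 B2 by fastforce+
  moreover have "card A + card (V - A) = card V"
    using sg AV unfolding simple_graph_def by (metis card_Diff_subset card_mono finite_subset le_add_diff_inverse)
  then have "card A \<le> card V div 2 \<or> card (V - A) \<le> card V div 2" by presburger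
  ultimately show ?thesis by blast
qed

lemma fort_extend_pendant:
  assumes sg: "simple_graph V E" and vy: "E v y" and pendant: "\<And>u. E v u \<Longrightarrow> u = y"
    and U: "fort (V - {v, y}) E U"
  shows "fort V E U \<or> fort V E (insert v U)"
proof -
  have sub: "U \<subseteq> V - {v, y}"
    and old: "\<And>x. x \<in> V - {v, y} - U \<Longrightarrow> card {u \<in> U. E x u} \<noteq> 1"
    using U unfolding fort_def by blast+
  have "finite V" and "v \<in> V" using sg vy unfolding simple_graph_def by blast+
  then have finU: "finite U" using sub by (meson finite_Diff finite_subset)
  have "v \<notin> U" using sub by blast
  have v_lonely: "{u \<in> U. E v u} = {}" using pendant sub by blast
  show ?thesis
  proof (cases "card {u \<in> U. E y u} = 1")
    case False
    have "card {u \<in> U. E x u} \<noteq> 1" if "x \<in> V - U" for x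
    proof -
      have "x = v \<or> x = y \<or> x \<in> V - {v, y} - U" using that by blast
      moreover have "card {u \<in> U. E v u} \<noteq> 1" unfolding v_lonely by simp
      ultimately show ?thesis using \<open>card {u \<in> U. E y u} \<noteq> 1\<close> old by blast
    qed
    then have "fort V E U" using U unfolding fort_def by blast
    then show ?thesis ..
  next
    case True
    have "card {u \<in> insert v U. E x u} \<noteq> 1" if x: "x \<in> V - insert v U" for x
    proof (cases "x = y")
      case True
      have "E y v" using vy simple_graph_sym[OF sg] by blast
      then have "card {u \<in> insert v U. E y u} = card {u \<in> U. E y u} + 1"
        using card_filter_insert[OF finU \<open>v \<notin> U\<close>, of "E y"] by simp
      then show ?thesis using True \<open>card {u \<in> U. E y u} = 1\<close> by simp
    next
      case False
      then have "\<not> E x v" using pendant simple_graph_sym[OF sg] by blast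
      then have "card {u \<in> insert v U. E x u} = card {u \<in> U. E x u}"
        using card_filter_insert[OF finU \<open>v \<notin> U\<close>, of "E x"] by simp
      moreover have "x \<in> V - {v, y} - U" using x False by blast
      ultimately show ?thesis using old by simp
    qed
    then have "fort V E (insert v U)" using sub \<open>v \<in> V\<close> unfolding fort_def by blast
    then show ?thesis ..
  qed
qed

lemma fort_extend_degree_two_merged_in:
  assumes sg: "simple_graph V E" and vy: "E v y" and vz: "E v z" and "y \<noteq> z"
    and deg2: "\<And>u. E v u \<Longrightarrow> u = y \<or> u = z"
    and U: "fort (V - {v, y}) (\<lambda>a b. E a b \<or> (a = z \<and> E y b) \<or> (b = z \<and> E y a)) U"
    and "z \<in> U"
  shows "fort V E (insert y U)"
proof -
  have sym: "\<And>a b. E a b \<Longrightarrow> E b a" and "finite V" and "y \<in> V"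
    using sg vy unfolding simple_graph_def by blast+
  have sub: "U \<subseteq> V - {v, y}" using U unfolding fort_def by blast
  then have finU: "finite U" using \<open>finite V\<close> by (meson finite_Diff finite_subset)
  have "y \<notin> U" using sub by blast
  have old: "card {u \<in> U. E x u \<or> (x = z \<and> E y u) \<or> (u = z \<and> E y x)} \<noteq> 1"
    if "x \<in> V - {v, y} - U" for x
    using U that unfolding fort_def by blast
  have "card {u \<in> insert y U. E x u} \<noteq> 1" if x: "x \<in> V - insert y U" for x
  proof (cases "x = v")
    case True
    then have "{u \<in> insert y U. E x u} = {y, z}" using vy vz deg2 \<open>z \<in> U\<close> by blast
    then show ?thesis using \<open>y \<noteq> z\<close> by simp
  next
    case False
    then have x': "x \<in> V - {v, y} - U" and "x \<noteq> z" using x \<open>z \<in> U\<close> by blast+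
    have count: "card {u \<in> insert y U. E x u} = card {u \<in> U. E x u} + (if E x y then 1 else 0)"
      using card_filter_insert[OF finU \<open>y \<notin> U\<close>] .
    show ?thesis
    proof (cases "E x y")
      case True
      then have "{u \<in> U. E x u \<or> (x = z \<and> E y u) \<or> (u = z \<and> E y x)} = insert z {u \<in> U. E x u}"
        using \<open>x \<noteq> z\<close> \<open>z \<in> U\<close> sym by blast
      then have "{u \<in> U. E x u} \<noteq> {}" using old[OF x'] by force
      then show ?thesis using count True finU by simp
    next
      case False
      then have "{u \<in> U. E x u \<or> (x = z \<and> E y u) \<or> (u = z \<and> E y x)} = {u \<in> U. E x u}"
        using \<open>x \<noteq> z\<close> sym by blast
      then show ?thesis using count False old[OF x'] by simp
    qed
  qed
  then have "fort V E (insert y U)" using sub \<open>y \<in> V\<close> unfolding fort_def by blast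
  then show ?thesis by blast
qed

lemma fort_extend_degree_two_merged_out:
  assumes sg: "simple_graph V E" and vy: "E v y" and vz: "E v z" and "y \<noteq> z"
    and deg2: "\<And>u. E v u \<Longrightarrow> u = y \<or> u = z"
    and U: "fort (V - {v, y}) (\<lambda>a b. E a b \<or> (a = z \<and> E y b) \<or> (b = z \<and> E y a)) U"
    and z_out: "z \<notin> U"
  shows "fort V E U \<or> fort V E (insert v U)"
proof -
  have sym: "\<And>a b. E a b \<Longrightarrow> E b a" and irr: "\<And>a. \<not> E a a" and "finite V"
    and "v \<in> V" "z \<in> V" using sg vy vz unfolding simple_graph_def by blast+
  have sub: "U \<subseteq> V - {v, y}" using U unfolding fort_def by blast
  then have finU: "finite U" using \<open>finite V\<close> by (meson finite_Diff finite_subset)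
  have "v \<notin> U" using sub by blast
  have old: "card {u \<in> U. E x u \<or> (x = z \<and> E y u) \<or> (u = z \<and> E y x)} \<noteq> 1"
    if "x \<in> V - {v, y} - U" for x
    using U that unfolding fort_def by blast
  have other: "card {u \<in> U. E x u} \<noteq> 1" if x: "x \<in> V - {v, y, z} - U" for x
  proof -
    have eq: "{u \<in> U. E x u \<or> (x = z \<and> E y u) \<or> (u = z \<and> E y x)} = {u \<in> U. E x u}"
      using x z_out by blast
    have "x \<in> V - {v, y} - U" using x by blast
    from old[OF this] show ?thesis unfolding eq .
  qed
  have z: "z \<in> V - {v, y} - U" using \<open>z \<in> V\<close> vz irr \<open>y \<noteq> z\<close> z_out by blast
  have eq: "{u \<in> U. E z u \<or> (z = z \<and> E y u) \<or> (u = z \<and> E y z)} =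
      {u \<in> U. E z u} \<union> {u \<in> U. E y u}"
    using z_out by blast
  from old[OF z] have z_nbrs: "card ({u \<in> U. E z u} \<union> {u \<in> U. E y u}) \<noteq> 1"
    unfolding eq .
  show ?thesis
  proof (cases "card {u \<in> U. E y u} \<noteq> 1 \<and> card {u \<in> U. E z u} \<noteq> 1")
    case True
    have "{u \<in> U. E v u} = {}" using deg2 sub z_out by blast
    then have "card {u \<in> U. E v u} \<noteq> 1" by (metis card.empty zero_neq_one)
    then have "card {u \<in> U. E x u} \<noteq> 1" if "x \<in> V - U" for x
      using that other[of x] True by (cases "x \<in> {v, y, z}") auto
    then have "fort V E U" using U unfolding fort_def by blast
    then show ?thesis by blast
  next
    case False
    then have "{u \<in> U. E y u} \<noteq> {}" "{u \<in> U. E z u} \<noteq> {}"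
      using z_nbrs by (metis Un_empty_left Un_empty_right card.empty zero_neq_one)+
    then have many: "card {u \<in> U. E x u} \<noteq> 0" if "x \<in> {y, z}" for x
      using that finU by auto
    have "card {u \<in> insert v U. E x u} \<noteq> 1" if x: "x \<in> V - insert v U" for x
    proof -
      have count: "card {u \<in> insert v U. E x u} = card {u \<in> U. E x u} + (if E x v then 1 else 0)"
        using card_filter_insert[OF finU \<open>v \<notin> U\<close>] .
      show ?thesis
      proof (cases "x \<in> {y, z}")
        case True
        then have "E x v" using vy vz sym by blast
        then show ?thesis using count many[OF True] by simp
      next
        case False
        then have "\<not> E x v" using deg2 sym by blast
        moreover have "x \<in> V - {v, y, z} - U" using x False by blast
        ultimately show ?thesis using count other by auto
      qed
    qed
    then have "fort V E (insert v U)" using sub \<open>v \<in> V\<close> unfolding fort_def by blast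
    then show ?thesis by blast
  qed
qed

lemma fort_extend_degree_two:
  assumes sg: "simple_graph V E" and vy: "E v y" and vz: "E v z" and "y \<noteq> z"
    and deg2: "\<And>u. E v u \<Longrightarrow> u = y \<or> u = z"
    and U: "fort (V - {v, y}) (\<lambda>a b. E a b \<or> (a = z \<and> E y b) \<or> (b = z \<and> E y a)) U"
  shows "fort V E U \<or> fort V E (insert y U) \<or> fort V E (insert v U)"
  using fort_extend_degree_two_merged_in[OF assms] fort_extend_degree_two_merged_out[OF assms] by blast

lemma simple_graph_induced:
  assumes "finite V" and "\<And>a b. E a b \<Longrightarrow> E b a"
  shows "simple_graph V (\<lambda>a b. a \<in> V \<and> b \<in> V \<and> a \<noteq> b \<and> E a b)"
  using assms unfolding simple_graph_def by blast

lemma small_fort_if_low_degree: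
  assumes sg: "simple_graph V E" and v: "v \<in> V" and deg: "card {u. E v u} \<le> 2"
    and smaller: "\<And>y E'. y \<in> V \<Longrightarrow> v \<noteq> y \<Longrightarrow> V - {v, y} \<noteq> {} \<Longrightarrow>
      (\<And>a b. E' a b \<Longrightarrow> E' b a) \<Longrightarrow> \<exists>U. fort (V - {v, y}) E' U \<and> card U \<le> card V div 2"
  shows "\<exists>U. fort V E U \<and> card U \<le> card V div 2 + 1"
proof -
  have finV: "finite V" and inV: "\<And>a b. E a b \<Longrightarrow> a \<in> V \<and> b \<in> V"
    and irr: "\<And>a. \<not> E a a" and sym: "\<And>a b. E a b \<Longrightarrow> E b a"
    using sg unfolding simple_graph_def by blast+
  have insert_small: "card (insert w U) \<le> card V div 2 + 1"
    if "fort (V - {v, y}) E' U" "card U \<le> card V div 2" for w y E' U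
  proof -
    have "finite U" using that(1) finV unfolding fort_def by (meson finite_Diff finite_subset)
    then show ?thesis using that(2) by (simp add: card_insert_if)
  qed
  have "card {u. E v u} = 0 \<or> card {u. E v u} = 1 \<or> card {u. E v u} = 2" using deg by linarith
  moreover have "finite {u. E v u}" using finV inV by (auto intro: finite_subset)
  ultimately consider "{u. E v u} = {}" | y where "{u. E v u} = {y}"
    | y z where "{u. E v u} = {y, z}" "y \<noteq> z"
    by (auto simp: card_1_singleton_iff card_2_iff)
  then show ?thesis
  proof cases
    case 1
    then have "fort V E {v}" using v sym by (intro fort_if_no_edges_leaving) auto
    then show ?thesis by (intro exI[of _ "{v}"]) auto
  next
    case (2 y)
    then have vy: "E v y" and pendant: "\<And>u. E v u \<Longrightarrow> u = y" by auto
    have "y \<in> V" "v \<noteq> y" using inV irr vy by blast+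
    show ?thesis
    proof (cases "V = {v, y}")
      case True
      then have "fort V E V" and "card V = 2" using \<open>v \<noteq> y\<close> unfolding fort_def by auto
      then show ?thesis by (intro exI[of _ V]) auto
    next
      case False
      then obtain U where U: "fort (V - {v, y}) E U" and "card U \<le> card V div 2"
        using smaller[of y E] v \<open>y \<in> V\<close> \<open>v \<noteq> y\<close> sym by blast
      then show ?thesis
        using fort_extend_pendant[OF sg vy pendant U] insert_small[OF U] by auto
    qed
  next
    case (3 y z)
    then have vy: "E v y" and vz: "E v z" and deg2: "\<And>u. E v u \<Longrightarrow> u = y \<or> u = z" by auto
    have "y \<in> V" "v \<noteq> y" "z \<in> V - {v, y}" using inV irr vy vz \<open>y \<noteq> z\<close> by blast+
    moreover have "E a b \<or> (a = z \<and> E y b) \<or> (b = z \<and> E y a) \<Longrightarrow>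
        E b a \<or> (b = z \<and> E y a) \<or> (a = z \<and> E y b)" for a b
      using sym by blast
    ultimately obtain U
      where U: "fort (V - {v, y}) (\<lambda>a b. E a b \<or> (a = z \<and> E y b) \<or> (b = z \<and> E y a)) U"
        and "card U \<le> card V div 2"
      using smaller[of y "\<lambda>a b. E a b \<or> (a = z \<and> E y b) \<or> (b = z \<and> E y a)"] by blast
    then show ?thesis
      using fort_extend_degree_two[OF sg vy vz \<open>y \<noteq> z\<close> deg2 U] insert_small[OF U] by auto
  qed
qed

lemma small_fort_exists:
  assumes "simple_graph V E" and "V \<noteq> {}"
  shows "\<exists>U. fort V E U \<and> card U \<le> card V div 2 + 1"
  using assms
proof (induction "card V" arbitrary: V E rule: less_induct)
  case less
  have sg: "simple_graph V E" by fact
  then have finV: "finite V" unfolding simple_graph_def by blast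
  have smaller: "\<exists>U. fort (V - {v, y}) E' U \<and> card U \<le> card V div 2"
    if vy: "v \<in> V" "y \<in> V" "v \<noteq> y" and ne: "V - {v, y} \<noteq> {}"
      and sym': "\<And>a b. E' a b \<Longrightarrow> E' b a" for v y E'
  proof -
    let ?V' = "V - {v, y}"
    let ?E' = "\<lambda>a b. a \<in> ?V' \<and> b \<in> ?V' \<and> a \<noteq> b \<and> E' a b"
    have "card {v, y} \<le> card V" using vy finV by (intro card_mono) auto
    then have card: "card ?V' + 2 = card V"
      using vy finV by (simp add: card_Diff_subset)
    have "simple_graph ?V' ?E'" using simple_graph_induced[of ?V' E'] finV sym' by blast
    moreover have "card ?V' < card V" using card by linarith
    ultimately obtain U where "fort ?V' ?E' U" and "card U \<le> card ?V' div 2 + 1"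
      using less.hyps ne by blast
    moreover have "fort ?V' ?E' U \<longleftrightarrow> fort ?V' E' U" by (rule fort_cong) auto
    ultimately show ?thesis using card by (intro exI[of _ U]) auto
  qed
  show ?case
  proof (cases "\<exists>v\<in>V. card {u. E v u} \<le> 2")
    case True
    then obtain v where "v \<in> V" "card {u. E v u} \<le> 2" by blast
    then show ?thesis using small_fort_if_low_degree[OF sg] smaller by blast
  next
    case False
    then show ?thesis using small_fort_if_min_degree_ge_3[OF sg less.prems(2)] by fastforce
  qed
qed

theorem theorem5:
  fixes V :: "'a set" and E :: "'a \<Rightarrow> 'a \<Rightarrow> bool"
  assumes "simple_graph V E" and "card V \<ge> 1"
  shows "failed_zf_number V E \<ge> (card V - 1) div 2"
proof -
  have "finite V" using assms(1) unfolding simple_graph_def by blast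
  obtain U where U: "fort V E U" and small: "card U \<le> card V div 2 + 1"
    using small_fort_exists[OF assms(1)] assms(2) by fastforce
  have "card (V - U) \<le> failed_zf_number V E"
    using card_le_failed_zf_number[OF \<open>finite V\<close> failed_zero_forcing_set_Diff_fort[OF assms(1) U]] .
  moreover have "card (V - U) = card V - card U"
    using U \<open>finite V\<close> unfolding fort_def by (meson card_Diff_subset finite_subset)
  ultimately show ?thesis using small assms(2) by linarith
qed

end
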